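(* Let $\mathbb X,\mathbb Y$ be Euclidean spaces, $\Phi\colon\mathbb X\rightrightarrows\mathbb Y$ with closed graph, $(\bar x,\bar y)\in\operatorname{gph}\Phi$, $u\in\mathbb S_{\mathbb X}$ and $\gamma>1$. Assume $A^\gamma(u)$ holds, i.e., $\ker D^*_\gamma\Phi((\bar x,\bar y);(u,0))\subset\{0\}$ and for all $\alpha,\beta\ge0$ $$\widetilde D^*_\gamma\Phi((\bar x,\bar y);(u,0))(0)\cup\bigcup_{w\in\mathbb S_{\mathbb Y}}D^*_\gamma\Phi((\bar x,\bar y);(u,\alpha w))(\beta w)\subset\operatorname{Im}D^*\Phi(\bar x,\bar y).$$ Then $\Phi$ is asymptotically regular at $(\bar x,\bar y)$ in direction $u$.
   Context: Pseudo-coderivative of order $\gamma$ ($u\in\mathbb S_{\mathbb X}$, $v\in\mathbb Y$): $x^*\in D^*_\gamma\Phi((\bar x,\bar y);(u,v))(y^* )$ iff there are $u_k\to u$, $v_k\to v$, $t_k\downarrow0$, $x_k^*\to x^*$, $y_k^*\to y^*$ with $(x_k^*,-y_k^*/(t_k\|u_k\|)^{\gamma-1})\in\widehat{\mathcal N}_{\operatorname{gph}\Phi}(\bar x+t_ku_k,\bar y+(t_k\|u_k\|)^\gamma v_k)$ for all $k$; Gfrerer's pseudo-coderivative $\widetilde D^*_\gamma$ uses instead the point $(\bar x+t_ku_k,\bar y+t_kv_k)$. $\ker\Psi=\{y^*\mid0\in\Psi(y^* )\}$. $D^*\Phi(x,y)(y^* )=\{x^*\mid(x^*,-y^* )\in\mathcal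 N_{\operatorname{gph}\Phi}(x,y)\}$, $\widehat D^*$ the same with the regular normal cone $\widehat{\mathcal N}$, $\operatorname{Im}D^*\Phi(\bar x,\bar y)=\bigcup_{y^*}D^*\Phi(\bar x,\bar y)(y^* )$. Asymptotic regularity in direction $u$: for all $(x_k,y_k)\in\operatorname{gph}\Phi$, $x_k^*$, $\lambda_k$, $x^*$, $y^*$ with $x_k\notin\Phi^{-1}(\bar y)$, $y_k\ne\bar y$, $x_k^*\in\widehat D^*\Phi(x_k,y_k)(\lambda_k)$ for all $k$ and $x_k\to\bar x$, $y_k\to\bar y$, $x_k^*\to x^*$, $\frac{x_k-\bar x}{\|x_k-\bar x\|}\to u$, $\frac{y_k-\bar y}{\|x_k-\bar x\|}\to0$, $\frac{\|y_k-\bar y\|}{\|x_k-\bar x\|}\lambda_k\to y^*$, $\|\lambda_k\|\to\infty$, $\frac{y_k-\bar y}{\|y_k-\bar y\|}-\frac{\lambda_k}{\|\lambda_k\|}\to0$, one has $x^*\in\operatorname{Im}D^*\Phi(\bar x,\bar y)$. *)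

theory Defs
  imports "HOL-Analysis.Analysis"
begin

text \<open>Set-valued maps are modelled as functions 'a \<Rightarrow> 'b set; dual spaces of
Euclidean spaces are identified with the spaces themselves via the inner product.\<close>

definition gph :: "('a \<Rightarrow> 'b set) \<Rightarrow> ('a \<times> 'b) set" where
  "gph Phi = {(x, y). y \<in> Phi x}"

text \<open>Regular (Frechet) normal cone; empty outside the set.\<close>
definition rnormal :: "('c::real_inner) set \<Rightarrow> 'c \<Rightarrow> 'c set" where
  "rnormal S z = {zs. z \<in> S \<and>
     (\<forall>e>0. \<exists>d>0. \<forall>z'\<in>S. norm (z' - z) < d \<longrightarrow> inner zs (z' - z) \<le> e * norm (z' - z))}"

definition lnormal :: "('c::real_inner) set \<Rightarrow> 'c \<Rightarrow> 'c set" where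
  "lnormal S z = {zs. z \<in> S \<and> (\<exists>zk zsk. (\<forall>k. zk k \<in> S \<and> zsk k \<in> rnormal S (zk k)) \<and>
       zk \<longlonglongrightarrow> z \<and> zsk \<longlonglongrightarrow> zs)}"

definition coderiv :: "('a::real_inner \<Rightarrow> 'b::real_inner set) \<Rightarrow> 'a \<Rightarrow> 'b \<Rightarrow> 'b \<Rightarrow> 'a set" where
  "coderiv Phi x y ys = {xs. (xs, - ys) \<in> lnormal (gph Phi) (x, y)}"

definition rcoderiv :: "('a::real_inner \<Rightarrow> 'b::real_inner set) \<Rightarrow> 'a \<Rightarrow> 'b \<Rightarrow> 'b \<Rightarrow> 'a set" where
  "rcoderiv Phi x y ys = {xs. (xs, - ys) \<in> rnormal (gph Phi) (x, y)}"

definition coderiv_image :: "('a::real_inner \<Rightarrow> 'b::real_inner set) \<Rightarrow> 'a \<Rightarrow> 'b \<Rightarrow> 'a set" where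
  "coderiv_image Phi x y = (\<Union>ys. coderiv Phi x y ys)"

definition ker :: "('b \<Rightarrow> 'a::zero set) \<Rightarrow> 'b set" where
  "ker Psi = {ys. 0 \<in> Psi ys}"

text \<open>Pseudo-coderivative of order gamma, D^*_gamma Phi((xb,yb);(u,v))(ys).\<close>
definition pcoderiv :: "real \<Rightarrow> ('a::real_inner \<Rightarrow> 'b::real_inner set) \<Rightarrow> 'a \<Rightarrow> 'b \<Rightarrow> 'a \<Rightarrow> 'b \<Rightarrow> 'b \<Rightarrow> 'a set" where
  "pcoderiv gamma Phi xb yb u v ys = {xs. \<exists>uk vk t xsk ysk.
     uk \<longlonglongrightarrow> u \<and> vk \<longlonglongrightarrow> v \<and> (\<forall>k. t k > 0) \<and> t \<longlonglongrightarrow> 0 \<and>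
     xsk \<longlonglongrightarrow> xs \<and> ysk \<longlonglongrightarrow> ys \<and>
     (\<forall>k. (xsk k, - ((1 / (t k * norm (uk k)) powr (gamma - 1)) *\<^sub>R ysk k))
          \<in> rnormal (gph Phi) (xb + t k *\<^sub>R uk k, yb + ((t k * norm (uk k)) powr gamma) *\<^sub>R vk k))}"

definition gpcoderiv :: "real \<Rightarrow> ('a::real_inner \<Rightarrow> 'b::real_inner set) \<Rightarrow> 'a \<Rightarrow> 'b \<Rightarrow> 'a \<Rightarrow> 'b \<Rightarrow> 'b \<Rightarrow> 'a set" where
  "gpcoderiv gamma Phi xb yb u v ys = {xs. \<exists>uk vk t xsk ysk.
     uk \<longlonglongrightarrow> u \<and> vk \<longlonglongrightarrow> v \<and> (\<forall>k. t k > 0) \<and> t \<longlonglongrightarrow> 0 \<and>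
     xsk \<longlonglongrightarrow> xs \<and> ysk \<longlonglongrightarrow> ys \<and>
     (\<forall>k. (xsk k, - ((1 / (t k * norm (uk k)) powr (gamma - 1)) *\<^sub>R ysk k))
          \<in> rnormal (gph Phi) (xb + t k *\<^sub>R uk k, yb + t k *\<^sub>R vk k))}"

definition asym_regular :: "('a::real_inner \<Rightarrow> 'b::real_inner set) \<Rightarrow> 'a \<Rightarrow> 'b \<Rightarrow> 'a \<Rightarrow> bool" where
  "asym_regular Phi xb yb u \<longleftrightarrow>
    (\<forall>(x::nat \<Rightarrow> 'a) (y::nat \<Rightarrow> 'b) (xs::nat \<Rightarrow> 'a) (lam::nat \<Rightarrow> 'b) xstar ystar.
      (\<forall>k. (x k, y k) \<in> gph Phi \<and> x k \<notin> {z. yb \<in> Phi z} \<and> y k \<noteq> yb \<and>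
           xs k \<in> rcoderiv Phi (x k) (y k) (lam k)) \<and>
      x \<longlonglongrightarrow> xb \<and> y \<longlonglongrightarrow> yb \<and> xs \<longlonglongrightarrow> xstar \<and>
      (\<lambda>k. (1 / norm (x k - xb)) *\<^sub>R (x k - xb)) \<longlonglongrightarrow> u \<and>
      (\<lambda>k. (1 / norm (x k - xb)) *\<^sub>R (y k - yb)) \<longlonglongrightarrow> 0 \<and>
      (\<lambda>k. (norm (y k - yb) / norm (x k - xb)) *\<^sub>R lam k) \<longlonglongrightarrow> ystar \<and>
      filterlim (\<lambda>k. norm (lam k)) at_top sequentially \<and>
      (\<lambda>k. (1 / norm (y k - yb)) *\<^sub>R (y k - yb) - (1 / norm (lam k)) *\<^sub>R lam k) \<longlonglongrightarrow> 0
      \<longrightarrow> xstar \<in> coderiv_image Phi xb yb)"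

end

theory Submission
  imports Defs
begin

text \<open>
  For a sequence (x_k, y_k, xs_k, lam_k) as in the definition of asymptotic regularity, put
  t_k = |x_k - xb| and let m_k = t_k^(gamma - 1) |lam_k| be the size of the rescaled multiplier.
  Then |y_k - yb| / t_k^gamma = |ystar_k| / m_k for ystar_k = (|y_k - yb| / t_k) lam_k -> ystar,
  and y_k - yb and lam_k point asymptotically in a common unit direction w.  Along a subsequence, m_k tends to
  infinity, to 0, or to some beta > 0.  If m_k -> infinity, dividing the normals by m_k puts w
  into the kernel of the pseudo-coderivative at (u, 0), which is impossible for a unit vector.
  If m_k -> 0, xstar lies in Gfrerer's pseudo-coderivative at (u, 0) evaluated at 0.
  If m_k -> beta, xstar lies in the pseudo-coderivative at (u, alpha w) evaluated at beta w,
  where alpha = |ystar| / beta.  In the last two cases condition A^gamma(u) places xstar in the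
  image of the limiting coderivative.
\<close>

lemma rnormal_scaleR:
  assumes "z \<in> rnormal S p" and "c \<ge> 0"
  shows "c *\<^sub>R z \<in> rnormal S p"
  unfolding rnormal_def
proof (intro CollectI conjI allI impI)
  have p: "p \<in> S"
    and z: "\<forall>e>0. \<exists>d>0. \<forall>z'\<in>S. norm (z' - p) < d \<longrightarrow> inner z (z' - p) \<le> e * norm (z' - p)"
    using assms(1) unfolding rnormal_def by blast+
  show "p \<in> S" by (fact p)
  fix e :: real
  assume "e > 0"
  then have "e / (c + 1) > 0" using assms(2) by simp
  with z obtain d where "d > 0"
    and d: "\<forall>z'\<in>S. norm (z' - p) < d \<longrightarrow> inner z (z' - p) \<le> e / (c + 1) * norm (z' - p)"
    by blast
  have "inner (c *\<^sub>R z) (z' - p) \<le> e * norm (z' - p)" if "z' \<in> S" "norm (z' - p) < d" for z'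
  proof -
    have "inner (c *\<^sub>R z) (z' - p) = c * inner z (z' - p)" by simp
    also have "\<dots> \<le> c * (e / (c + 1) * norm (z' - p))"
      using d that assms(2) by (intro mult_left_mono) auto
    also have "\<dots> \<le> e * norm (z' - p)"
      using \<open>e > 0\<close> assms(2) by (simp add: field_simps)
    finally show ?thesis .
  qed
  with \<open>d > 0\<close> show "\<exists>d>0. \<forall>z'\<in>S. norm (z' - p) < d \<longrightarrow> inner (c *\<^sub>R z) (z' - p) \<le> e * norm (z' - p)"
    by blast
qed

lemma scaleR_norm_sgn: "norm z *\<^sub>R sgn z = (z::'a::real_normed_vector)"
  by (cases "z = 0") (simp_all add: sgn_div_norm)

lemma inverse_norm_scaleR_eq_sgn: "(1 / norm z) *\<^sub>R z = sgn (z::'a::real_normed_vector)"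
  by (simp add: sgn_div_norm divide_inverse_commute)

lemma pcoderiv_memI:
  fixes Phi :: "'a::real_inner \<Rightarrow> 'b::real_inner set"
  assumes x_ne: "\<And>k. x k \<noteq> xb" and x_lim: "x \<longlonglongrightarrow> xb"
    and x_dir: "(\<lambda>k. sgn (x k - xb)) \<longlonglongrightarrow> u"
    and y_rate: "(\<lambda>k. (1 / norm (x k - xb) powr gamma) *\<^sub>R (y k - yb)) \<longlonglongrightarrow> v"
    and xs_lim: "xs \<longlonglongrightarrow> xstar"
    and lam_rate: "(\<lambda>k. norm (x k - xb) powr (gamma - 1) *\<^sub>R lam k) \<longlonglongrightarrow> ystar"
    and normal: "\<And>k. (xs k, - lam k) \<in> rnormal (gph Phi) (x k, y k)"
  shows "xstar \<in> pcoderiv gamma Phi xb yb u v ystar"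
proof -
  define t where "t k = norm (x k - xb)" for k
  have t_pos: "t k > 0" for k
    using x_ne unfolding t_def by simp
  have t_lim: "t \<longlonglongrightarrow> 0"
    using x_lim unfolding t_def by (simp add: LIM_zero tendsto_norm_zero)
  have normal_rescaled: "(xs k, - ((1 / (t k * norm (sgn (x k - xb))) powr (gamma - 1)) *\<^sub>R
           (t k powr (gamma - 1) *\<^sub>R lam k)))
        \<in> rnormal (gph Phi) (xb + t k *\<^sub>R sgn (x k - xb),
             yb + ((t k * norm (sgn (x k - xb))) powr gamma) *\<^sub>R ((1 / t k powr gamma) *\<^sub>R (y k - yb)))"
    for k
    using normal[of k] t_pos[of k] x_ne[of k] unfolding t_def by (simp add: norm_sgn scaleR_norm_sgn)
  show ?thesis
    unfolding pcoderiv_def mem_Collect_eq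
    by (rule exI[of _ "\<lambda>k. sgn (x k - xb)"], rule exI[of _ "\<lambda>k. (1 / t k powr gamma) *\<^sub>R (y k - yb)"],
        rule exI[of _ t], rule exI[of _ xs], rule exI[of _ "\<lambda>k. t k powr (gamma - 1) *\<^sub>R lam k"])
      (use x_dir y_rate xs_lim lam_rate t_pos t_lim normal_rescaled in \<open>unfold t_def, blast\<close>)
qed

lemma gpcoderiv_memI:
  fixes Phi :: "'a::real_inner \<Rightarrow> 'b::real_inner set"
  assumes x_ne: "\<And>k. x k \<noteq> xb" and x_lim: "x \<longlonglongrightarrow> xb"
    and x_dir: "(\<lambda>k. sgn (x k - xb)) \<longlonglongrightarrow> u"
    and y_rate: "(\<lambda>k. (1 / norm (x k - xb)) *\<^sub>R (y k - yb)) \<longlonglongrightarrow> v"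
    and xs_lim: "xs \<longlonglongrightarrow> xstar"
    and lam_rate: "(\<lambda>k. norm (x k - xb) powr (gamma - 1) *\<^sub>R lam k) \<longlonglongrightarrow> ystar"
    and normal: "\<And>k. (xs k, - lam k) \<in> rnormal (gph Phi) (x k, y k)"
  shows "xstar \<in> gpcoderiv gamma Phi xb yb u v ystar"
proof -
  define t where "t k = norm (x k - xb)" for k
  have t_pos: "t k > 0" for k
    using x_ne unfolding t_def by simp
  have t_lim: "t \<longlonglongrightarrow> 0"
    using x_lim unfolding t_def by (simp add: LIM_zero tendsto_norm_zero)
  have normal_rescaled: "(xs k, - ((1 / (t k * norm (sgn (x k - xb))) powr (gamma - 1)) *\<^sub>R
           (t k powr (gamma - 1) *\<^sub>R lam k)))
        \<in> rnormal (gph Phi) (xb + t k *\<^sub>R sgn (x k - xb), yb + t k *\<^sub>R ((1 / t k) *\<^sub>R (y k - yb)))"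
    for k
    using normal[of k] t_pos[of k] x_ne[of k] unfolding t_def by (simp add: norm_sgn scaleR_norm_sgn)
  show ?thesis
    unfolding gpcoderiv_def mem_Collect_eq
    by (rule exI[of _ "\<lambda>k. sgn (x k - xb)"], rule exI[of _ "\<lambda>k. (1 / t k) *\<^sub>R (y k - yb)"],
        rule exI[of _ t], rule exI[of _ xs], rule exI[of _ "\<lambda>k. t k powr (gamma - 1) *\<^sub>R lam k"])
      (use x_dir y_rate xs_lim lam_rate t_pos t_lim normal_rescaled in \<open>unfold t_def, blast\<close>)
qed

lemma compact_subseq_nonneg_at_top_or_convergent:
  fixes b :: "nat \<Rightarrow> real" and w :: "nat \<Rightarrow> 'a::metric_space"
  assumes "compact K" and "\<And>k. w k \<in> K" and "\<And>k. b k \<ge> 0"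
  obtains r w0 where "strict_mono r" and "w0 \<in> K" and "(w \<circ> r) \<longlonglongrightarrow> w0"
    and "filterlim (b \<circ> r) at_top sequentially \<or> (\<exists>beta\<ge>0. (b \<circ> r) \<longlonglongrightarrow> beta)"
proof -
  \<comment> \<open>\<open>b \<mapsto> 1 / (1 + b)\<close> maps \<open>[0, \<infinity>]\<close> onto the compact interval \<open>[0, 1]\<close>.\<close>
  define d where "d k = 1 / (1 + b k)" for k
  have d_pos: "d k > 0" and b_eq: "b k = 1 / d k - 1" for k
    using assms(3)[of k] unfolding d_def by (simp_all add: add_pos_nonneg)
  have "\<forall>k. (d k, w k) \<in> {0..1} \<times> K"
    using assms(2,3) d_pos unfolding d_def by simp
  then obtain p r where p: "p \<in> {0..1} \<times> K" and r: "strict_mono r"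
    and lim: "((\<lambda>k. (d k, w k)) \<circ> r) \<longlonglongrightarrow> p"
    by (rule seq_compactE[OF compact_imp_seq_compact[OF compact_Times[OF compact_Icc assms(1)]]])
  have d_lim: "(d \<circ> r) \<longlonglongrightarrow> fst p" and w_lim: "(w \<circ> r) \<longlonglongrightarrow> snd p"
    using tendsto_fst[OF lim] tendsto_snd[OF lim] by (simp_all add: o_def)
  have b_cases: "filterlim (b \<circ> r) at_top sequentially \<or> (\<exists>beta\<ge>0. (b \<circ> r) \<longlonglongrightarrow> beta)"
  proof (cases "fst p = 0")
    case True
    have "filterlim (\<lambda>k. inverse (d (r k))) at_top sequentially"
      using d_lim d_pos True by (intro filterlim_inverse_at_top) (simp_all add: o_def)
    then have "filterlim (\<lambda>k. - 1 + inverse (d (r k))) at_top sequentially"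
      by (rule filterlim_tendsto_add_at_top[OF tendsto_const])
    then show ?thesis
      unfolding b_eq o_def by (simp add: divide_inverse)
  next
    case False
    with p have "fst p > 0" "fst p \<le> 1" by auto
    have "(b \<circ> r) \<longlonglongrightarrow> 1 / fst p - 1"
      unfolding b_eq o_def using d_lim False by (auto intro!: tendsto_intros simp: o_def)
    moreover have "1 / fst p - 1 \<ge> 0"
      using \<open>fst p > 0\<close> \<open>fst p \<le> 1\<close> by simp
    ultimately show ?thesis by blast
  qed
  show ?thesis
    by (rule that[OF r _ w_lim b_cases]) (use p in auto)
qed

locale asym_sequence =
  fixes Phi :: "'a::real_inner \<Rightarrow> 'b::real_inner set"
    and xb :: 'a and yb :: 'b and u :: 'a
    and x :: "nat \<Rightarrow> 'a" and y :: "nat \<Rightarrow> 'b" and xs :: "nat \<Rightarrow> 'a" and lam :: "nat \<Rightarrow> 'b"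
    and xstar :: 'a and ystar :: 'b
  assumes x_ne: "x k \<noteq> xb" and y_ne: "y k \<noteq> yb"
    and normal: "(xs k, - lam k) \<in> rnormal (gph Phi) (x k, y k)"
    and x_lim: "x \<longlonglongrightarrow> xb" and xs_lim: "xs \<longlonglongrightarrow> xstar"
    and x_dir: "(\<lambda>k. sgn (x k - xb)) \<longlonglongrightarrow> u"
    and y_rate: "(\<lambda>k. (1 / norm (x k - xb)) *\<^sub>R (y k - yb)) \<longlonglongrightarrow> 0"
    and ystar_lim: "(\<lambda>k. (norm (y k - yb) / norm (x k - xb)) *\<^sub>R lam k) \<longlonglongrightarrow> ystar"
    and sgn_align: "(\<lambda>k. sgn (y k - yb) - sgn (lam k)) \<longlonglongrightarrow> 0"
begin

lemma subseq:
  assumes "strict_mono r"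
  shows "asym_sequence Phi xb yb u (x \<circ> r) (y \<circ> r) (xs \<circ> r) (lam \<circ> r) xstar ystar"
proof
  note sub = LIMSEQ_subseq_LIMSEQ[OF _ assms]
  from sub[OF x_lim] sub[OF xs_lim] sub[OF x_dir] sub[OF y_rate] sub[OF ystar_lim] sub[OF sgn_align]
  show "(x \<circ> r) \<longlonglongrightarrow> xb" "(xs \<circ> r) \<longlonglongrightarrow> xstar"
    "(\<lambda>k. sgn ((x \<circ> r) k - xb)) \<longlonglongrightarrow> u"
    "(\<lambda>k. (1 / norm ((x \<circ> r) k - xb)) *\<^sub>R ((y \<circ> r) k - yb)) \<longlonglongrightarrow> 0"
    "(\<lambda>k. (norm ((y \<circ> r) k - yb) / norm ((x \<circ> r) k - xb)) *\<^sub>R (lam \<circ> r) k) \<longlonglongrightarrow> ystar"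
    "(\<lambda>k. sgn ((y \<circ> r) k - yb) - sgn ((lam \<circ> r) k)) \<longlonglongrightarrow> 0"
    by (simp_all add: o_def)
qed (simp_all add: x_ne y_ne normal)

lemma norm_y_rate_eq:
  assumes "norm (x k - xb) powr (gamma - 1) * norm (lam k) > 0"
  shows "norm ((1 / norm (x k - xb) powr gamma) *\<^sub>R (y k - yb))
    = norm ((norm (y k - yb) / norm (x k - xb)) *\<^sub>R lam k) / (norm (x k - xb) powr (gamma - 1) * norm (lam k))"
proof -
  define t where "t = norm (x k - xb)"
  have "t > 0" using x_ne unfolding t_def by simp
  have "norm ((norm (y k - yb) / t) *\<^sub>R lam k) = norm (y k - yb) * norm (lam k) * (t powr (gamma - 1) / t powr gamma)"
    using \<open>t > 0\<close> by (simp add: powr_diff)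
  also have "\<dots> = norm ((1 / t powr gamma) *\<^sub>R (y k - yb)) * (t powr (gamma - 1) * norm (lam k))"
    using \<open>t > 0\<close> by simp
  finally have "norm ((norm (y k - yb) / norm (x k - xb)) *\<^sub>R lam k)
      = norm ((1 / norm (x k - xb) powr gamma) *\<^sub>R (y k - yb)) * (norm (x k - xb) powr (gamma - 1) * norm (lam k))"
    unfolding t_def .
  with assms show ?thesis
    by (metis less_irrefl nonzero_mult_div_cancel_right)
qed

lemma sgn_lam_tendsto:
  assumes "(\<lambda>k. sgn (y k - yb)) \<longlonglongrightarrow> w"
  shows "(\<lambda>k. sgn (lam k)) \<longlonglongrightarrow> w"
  using tendsto_diff[OF assms sgn_align] by simp

lemma zero_in_pcoderiv_if_multipliers_unbounded:
  assumes unbounded: "filterlim (\<lambda>k. norm (x k - xb) powr (gamma - 1) * norm (lam k)) at_top sequentially"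
    and w_lim: "(\<lambda>k. sgn (y k - yb)) \<longlonglongrightarrow> w"
  shows "0 \<in> pcoderiv gamma Phi xb yb u 0 w"
proof -
  define m where "m k = norm (x k - xb) powr (gamma - 1) * norm (lam k)" for k
  have m_inf: "filterlim m at_infinity sequentially"
    using filterlim_at_top_imp_at_infinity[OF unbounded] unfolding m_def .
  have m_pos: "\<forall>\<^sub>F k in sequentially. m k > 0"
    using unbounded unfolding m_def filterlim_at_top_dense by blast
  have y_rate_zero: "(\<lambda>k. (1 / norm (x k - xb) powr gamma) *\<^sub>R (y k - yb)) \<longlonglongrightarrow> 0"
  proof (rule tendsto_norm_zero_cancel, rule Lim_transform_eventually)
    show "(\<lambda>k. norm ((norm (y k - yb) / norm (x k - xb)) *\<^sub>R lam k) / m k) \<longlonglongrightarrow> 0"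
      by (rule tendsto_divide_0[OF tendsto_norm[OF ystar_lim] m_inf])
    show "\<forall>\<^sub>F k in sequentially. norm ((norm (y k - yb) / norm (x k - xb)) *\<^sub>R lam k) / m k
        = norm ((1 / norm (x k - xb) powr gamma) *\<^sub>R (y k - yb))"
      using m_pos unfolding m_def by eventually_elim (rule norm_y_rate_eq[symmetric])
  qed
  have xs_rate: "(\<lambda>k. (1 / m k) *\<^sub>R xs k) \<longlonglongrightarrow> 0"
  proof (rule tendsto_norm_zero_cancel)
    have "m k \<ge> 0" for k unfolding m_def by simp
    then show "(\<lambda>k. norm ((1 / m k) *\<^sub>R xs k)) \<longlonglongrightarrow> 0"
      using tendsto_divide_0[OF tendsto_norm[OF xs_lim] m_inf] by simp
  qed
  have "norm (x k - xb) powr (gamma - 1) *\<^sub>R ((1 / m k) *\<^sub>R lam k) = sgn (lam k)" for k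
    using x_ne[of k] unfolding m_def by (cases "lam k = 0") (simp_all add: sgn_div_norm divide_inverse)
  then have lam_rate: "(\<lambda>k. norm (x k - xb) powr (gamma - 1) *\<^sub>R ((1 / m k) *\<^sub>R lam k)) \<longlonglongrightarrow> w"
    using sgn_lam_tendsto[OF w_lim] by simp
  have "((1 / m k) *\<^sub>R xs k, - ((1 / m k) *\<^sub>R lam k)) \<in> rnormal (gph Phi) (x k, y k)" for k
    using rnormal_scaleR[OF normal, of "1 / m k"] unfolding m_def by simp
  then show ?thesis
    by (rule pcoderiv_memI[OF x_ne x_lim x_dir y_rate_zero xs_rate lam_rate])
qed

lemma in_gpcoderiv_if_multipliers_vanish:
  assumes "(\<lambda>k. norm (x k - xb) powr (gamma - 1) * norm (lam k)) \<longlonglongrightarrow> 0"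
  shows "xstar \<in> gpcoderiv gamma Phi xb yb u 0 0"
proof (rule gpcoderiv_memI[OF x_ne x_lim x_dir y_rate xs_lim _ normal])
  have "(\<lambda>k. norm (norm (x k - xb) powr (gamma - 1) *\<^sub>R lam k)) \<longlonglongrightarrow> 0"
    using assms by simp
  then show "(\<lambda>k. norm (x k - xb) powr (gamma - 1) *\<^sub>R lam k) \<longlonglongrightarrow> 0"
    by (rule tendsto_norm_zero_cancel)
qed

lemma in_pcoderiv_if_multipliers_converge:
  assumes m_lim: "(\<lambda>k. norm (x k - xb) powr (gamma - 1) * norm (lam k)) \<longlonglongrightarrow> beta"
    and "beta > 0" and w_lim: "(\<lambda>k. sgn (y k - yb)) \<longlonglongrightarrow> w"
  shows "xstar \<in> pcoderiv gamma Phi xb yb u ((norm ystar / beta) *\<^sub>R w) (beta *\<^sub>R w)"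
proof (rule pcoderiv_memI[OF x_ne x_lim x_dir _ xs_lim _ normal])
  define m where "m k = norm (x k - xb) powr (gamma - 1) * norm (lam k)" for k
  have m_pos: "\<forall>\<^sub>F k in sequentially. m k > 0"
    using order_tendstoD(1)[OF m_lim \<open>beta > 0\<close>] unfolding m_def .
  define v where "v k = (1 / norm (x k - xb) powr gamma) *\<^sub>R (y k - yb)" for k
  have "(\<lambda>k. norm (v k)) \<longlonglongrightarrow> norm ystar / beta"
  proof (rule Lim_transform_eventually)
    show "(\<lambda>k. norm ((norm (y k - yb) / norm (x k - xb)) *\<^sub>R lam k) / m k) \<longlonglongrightarrow> norm ystar / beta"
      using tendsto_divide[OF tendsto_norm[OF ystar_lim] m_lim] \<open>beta > 0\<close> unfolding m_def by simp
    show "\<forall>\<^sub>F k in sequentially. norm ((norm (y k - yb) / norm (x k - xb)) *\<^sub>R lam k) / m k = norm (v k)"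
      using m_pos unfolding m_def v_def by eventually_elim (rule norm_y_rate_eq[symmetric])
  qed
  from tendsto_scaleR[OF this w_lim]
  have "(\<lambda>k. norm (v k) *\<^sub>R sgn (y k - yb)) \<longlonglongrightarrow> (norm ystar / beta) *\<^sub>R w" .
  also have "(\<lambda>k. norm (v k) *\<^sub>R sgn (y k - yb)) = v"
  proof
    fix k
    have "sgn (v k) = sgn (y k - yb)"
      using x_ne[of k] unfolding v_def by (simp add: sgn_scaleR)
    then show "norm (v k) *\<^sub>R sgn (y k - yb) = v k"
      by (metis scaleR_norm_sgn)
  qed
  finally show "(\<lambda>k. (1 / norm (x k - xb) powr gamma) *\<^sub>R (y k - yb)) \<longlonglongrightarrow> (norm ystar / beta) *\<^sub>R w"
    unfolding v_def .
  have "norm (x k - xb) powr (gamma - 1) *\<^sub>R lam k = m k *\<^sub>R sgn (lam k)" for k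
    unfolding m_def by (metis scaleR_norm_sgn scaleR_scaleR)
  then show "(\<lambda>k. norm (x k - xb) powr (gamma - 1) *\<^sub>R lam k) \<longlonglongrightarrow> beta *\<^sub>R w"
    using tendsto_scaleR[OF m_lim sgn_lam_tendsto[OF w_lim]] unfolding m_def by simp
qed

end

lemma asym_sequence_limit_in_coderiv_image:
  fixes Phi :: "'a::real_inner \<Rightarrow> 'b::euclidean_space set"
  assumes "asym_sequence Phi xb yb u x y xs lam xstar ystar"
    and ker: "ker (pcoderiv gamma Phi xb yb u 0) \<subseteq> {0}"
    and image: "\<And>alpha beta. alpha \<ge> 0 \<Longrightarrow> beta \<ge> 0 \<Longrightarrow>
           gpcoderiv gamma Phi xb yb u 0 0 \<union>
           (\<Union>w\<in>sphere 0 1. pcoderiv gamma Phi xb yb u (alpha *\<^sub>R w) (beta *\<^sub>R w))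
           \<subseteq> coderiv_image Phi xb yb"
  shows "xstar \<in> coderiv_image Phi xb yb"
proof -
  interpret asym_sequence Phi xb yb u x y xs lam xstar ystar
    by fact
  define m where "m k = norm (x k - xb) powr (gamma - 1) * norm (lam k)" for k
  have sgn_sphere: "sgn (y k - yb) \<in> sphere 0 1" and m_nonneg: "m k \<ge> 0" for k
    using y_ne unfolding m_def by (simp_all add: norm_sgn)
  obtain r w where r: "strict_mono r" and w: "w \<in> sphere 0 1"
    and w_lim: "((\<lambda>k. sgn (y k - yb)) \<circ> r) \<longlonglongrightarrow> w"
    and m_cases: "filterlim (m \<circ> r) at_top sequentially \<or> (\<exists>beta\<ge>0. (m \<circ> r) \<longlonglongrightarrow> beta)"
    by (rule compact_subseq_nonneg_at_top_or_convergent[OF compact_sphere sgn_sphere m_nonneg])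
  interpret sub: asym_sequence Phi xb yb u "x \<circ> r" "y \<circ> r" "xs \<circ> r" "lam \<circ> r" xstar ystar
    using r by (rule subseq)
  have sub_w_lim: "(\<lambda>k. sgn ((y \<circ> r) k - yb)) \<longlonglongrightarrow> w"
    using w_lim by (simp add: o_def)
  have sub_m: "m \<circ> r = (\<lambda>k. norm ((x \<circ> r) k - xb) powr (gamma - 1) * norm ((lam \<circ> r) k))"
    unfolding m_def by (simp add: o_def)
  consider "filterlim (m \<circ> r) at_top sequentially" | "(m \<circ> r) \<longlonglongrightarrow> 0"
    | beta where "(m \<circ> r) \<longlonglongrightarrow> beta" "beta > 0"
    using m_cases unfolding le_less by blast
  then show ?thesis
  proof cases
    case 1
    then have "0 \<in> pcoderiv gamma Phi xb yb u 0 w"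
      unfolding sub_m by (rule sub.zero_in_pcoderiv_if_multipliers_unbounded[OF _ sub_w_lim])
    with ker w show ?thesis
      unfolding ker_def by auto
  next
    case 2
    then have "xstar \<in> gpcoderiv gamma Phi xb yb u 0 0"
      unfolding sub_m by (rule sub.in_gpcoderiv_if_multipliers_vanish)
    with image[of 0 0] show ?thesis by blast
  next
    case (3 beta)
    then have "xstar \<in> pcoderiv gamma Phi xb yb u ((norm ystar / beta) *\<^sub>R w) (beta *\<^sub>R w)"
      unfolding sub_m by (rule sub.in_pcoderiv_if_multipliers_converge[OF _ _ sub_w_lim])
    moreover have "norm ystar / beta \<ge> 0" and "beta \<ge> 0"
      using \<open>beta > 0\<close> by simp_all
    ultimately show ?thesis
      using image w by blast
  qed
qed

lemma asym_regularI:
  assumes "yb \<in> Phi xb"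
    and "\<And>x y xs lam xstar ystar. asym_sequence Phi xb yb u x y xs lam xstar ystar
           \<Longrightarrow> xstar \<in> coderiv_image Phi xb yb"
  shows "asym_regular Phi xb yb u"
  unfolding asym_regular_def
proof (intro allI impI, elim conjE)
  fix x y xs lam xstar ystar
  assume data: "\<forall>k. (x k, y k) \<in> gph Phi \<and> x k \<notin> {z. yb \<in> Phi z} \<and> y k \<noteq> yb \<and>
           xs k \<in> rcoderiv Phi (x k) (y k) (lam k)"
    and x_lim: "x \<longlonglongrightarrow> xb" and xs_lim: "xs \<longlonglongrightarrow> xstar"
    and x_dir: "(\<lambda>k. (1 / norm (x k - xb)) *\<^sub>R (x k - xb)) \<longlonglongrightarrow> u"
    and y_rate: "(\<lambda>k. (1 / norm (x k - xb)) *\<^sub>R (y k - yb)) \<longlonglongrightarrow> 0"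
    and ystar_lim: "(\<lambda>k. (norm (y k - yb) / norm (x k - xb)) *\<^sub>R lam k) \<longlonglongrightarrow> ystar"
    and sgn_align: "(\<lambda>k. (1 / norm (y k - yb)) *\<^sub>R (y k - yb) - (1 / norm (lam k)) *\<^sub>R lam k) \<longlonglongrightarrow> 0"
  have "asym_sequence Phi xb yb u x y xs lam xstar ystar"
  proof
    fix k
    show "x k \<noteq> xb" "y k \<noteq> yb"
      using data assms(1) by auto
    show "(xs k, - lam k) \<in> rnormal (gph Phi) (x k, y k)"
      using data unfolding rcoderiv_def by blast
  qed (use x_lim xs_lim x_dir y_rate ystar_lim sgn_align in \<open>simp_all add: inverse_norm_scaleR_eq_sgn\<close>)
  then show "xstar \<in> coderiv_image Phi xb yb"
    by (rule assms(2))
qed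

theorem theorem5p17:
  fixes Phi :: "'a::euclidean_space \<Rightarrow> 'b::euclidean_space set"
    and xb :: 'a and yb :: 'b and u :: 'a and gamma :: real
  assumes "closed (gph Phi)"
    and "(xb, yb) \<in> gph Phi"
    and "u \<in> sphere 0 1"
    and "gamma > 1"
    and "ker (pcoderiv gamma Phi xb yb u 0) \<subseteq> {0}"
    and "\<And>alpha beta. alpha \<ge> 0 \<Longrightarrow> beta \<ge> 0 \<Longrightarrow>
           gpcoderiv gamma Phi xb yb u 0 0 \<union>
           (\<Union>w\<in>sphere 0 1. pcoderiv gamma Phi xb yb u (alpha *\<^sub>R w) (beta *\<^sub>R w))
           \<subseteq> coderiv_image Phi xb yb"
  shows "asym_regular Phi xb yb u"
proof (rule asym_regularI)
  show "yb \<in> Phi xb"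
    using assms(2) by (simp add: gph_def)
  fix x y xs lam xstar ystar
  assume "asym_sequence Phi xb yb u x y xs lam xstar ystar"
  then show "xstar \<in> coderiv_image Phi xb yb"
    using assms(5,6) by (rule asym_sequence_limit_in_coderiv_image)
qed

end
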